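(* For finite $n$, if the Malthusian exponent $\Xi$ exists, then $\Xi<\lambda_{2,\max}^{-1}$.
   Context: $\sigma_1^2\ge\dots\ge\sigma_n^2\ge0$ are the eigenvalues of $\boldsymbol A\boldsymbol A^T$ for $\boldsymbol A\in\mathbb R^{n\times d}$; $\gamma>0$, $\zeta\in(0,1)$, $\Delta\in[0,1)$. For $j\in[n]$: $\Omega_j=1-\gamma\zeta\sigma_j^2+\Delta$, $\lambda_{2,j},\lambda_{3,j}=\frac{-2\Delta+\Omega_j^2\pm\sqrt{\Omega_j^2(\Omega_j^2-4\Delta)}}{2}$ (complex root if needed); $\lambda_{2,\max}=\max\{|\lambda_{2,j}|:\sigma_j^2>0\}$. $H_2(t)=\frac1n\sum_j\frac{2\sigma_j^4}{\Omega_j^2-4\Delta}\big(-\Delta^{t+1}+\frac12\lambda_{2,j}^{t+1}+\frac12\lambda_{3,j}^{t+1}\big)$ (by continuity when $\Omega_j^2=4\Delta$). The Malthusian exponent $\Xi$ is the unique solution of $\gamma^2\zeta(1-\zeta)\sum_{t=0}^\infty\Xi^tH_2(t)=1$, when such a solution exists. *)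

theory Defs
  imports "HOL-Analysis.Analysis"
begin

text \<open>Throughout, \<open>s\<close> stands for an eigenvalue \<open>\<sigma>_j^2\<close> of \<open>A A^T\<close>.\<close>

definition Omega :: "real \<Rightarrow> real \<Rightarrow> real \<Rightarrow> real \<Rightarrow> real" where
  "Omega \<gamma> \<zeta> \<Delta> s = 1 - \<gamma> * \<zeta> * s + \<Delta>"

definition lam2 :: "real \<Rightarrow> real \<Rightarrow> real \<Rightarrow> real \<Rightarrow> complex" where
  "lam2 \<gamma> \<zeta> \<Delta> s =
     (let \<Omega> = Omega \<gamma> \<zeta> \<Delta> s in
      (complex_of_real (- 2 * \<Delta> + \<Omega>^2) + csqrt (complex_of_real (\<Omega>^2 * (\<Omega>^2 - 4 * \<Delta>)))) / 2)"

definition lam3 :: "real \<Rightarrow> real \<Rightarrow> real \<Rightarrow> real \<Rightarrow> complex" where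
  "lam3 \<gamma> \<zeta> \<Delta> s =
     (let \<Omega> = Omega \<gamma> \<zeta> \<Delta> s in
      (complex_of_real (- 2 * \<Delta> + \<Omega>^2) - csqrt (complex_of_real (\<Omega>^2 * (\<Omega>^2 - 4 * \<Delta>)))) / 2)"

text \<open>When \<open>\<Omega>^2 = 4\<Delta>\<close>
  the value is the continuous extension, which equals \<open>\<sigma>^4 (t+1)^2 \<Delta>^t\<close>.
  The expression is real (conjugate roots); we take the real part of the complex value.\<close>
definition H2_term :: "real \<Rightarrow> real \<Rightarrow> real \<Rightarrow> real \<Rightarrow> nat \<Rightarrow> real" where
  "H2_term \<gamma> \<zeta> \<Delta> s t =
     (let \<Omega> = Omega \<gamma> \<zeta> \<Delta> s in
      if \<Omega>^2 = 4 * \<Delta> then s^2 * (real t + 1)^2 * \<Delta>^t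
      else Re (complex_of_real (2 * s^2 / (\<Omega>^2 - 4 * \<Delta>)) *
               (- complex_of_real (\<Delta>^(t+1)) + lam2 \<gamma> \<zeta> \<Delta> s ^ (t+1) / 2
                  + lam3 \<gamma> \<zeta> \<Delta> s ^ (t+1) / 2)))"

definition H2 :: "nat \<Rightarrow> (nat \<Rightarrow> real) \<Rightarrow> real \<Rightarrow> real \<Rightarrow> real \<Rightarrow> nat \<Rightarrow> real" where
  "H2 n \<sigma>2 \<gamma> \<zeta> \<Delta> t = (1 / real n) * (\<Sum>j<n. H2_term \<gamma> \<zeta> \<Delta> (\<sigma>2 j) t)"

definition lam2_max :: "nat \<Rightarrow> (nat \<Rightarrow> real) \<Rightarrow> real \<Rightarrow> real \<Rightarrow> real \<Rightarrow> real" where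
  "lam2_max n \<sigma>2 \<gamma> \<zeta> \<Delta> = Max {cmod (lam2 \<gamma> \<zeta> \<Delta> (\<sigma>2 j)) | j. j < n \<and> \<sigma>2 j > 0}"

definition malthusian_eq :: "nat \<Rightarrow> (nat \<Rightarrow> real) \<Rightarrow> real \<Rightarrow> real \<Rightarrow> real \<Rightarrow> real \<Rightarrow> bool" where
  "malthusian_eq n \<sigma>2 \<gamma> \<zeta> \<Delta> x \<longleftrightarrow>
     summable (\<lambda>t. x^t * H2 n \<sigma>2 \<gamma> \<zeta> \<Delta> t) \<and>
     \<gamma>^2 * \<zeta> * (1 - \<zeta>) * (\<Sum>t. x^t * H2 n \<sigma>2 \<gamma> \<zeta> \<Delta> t) = 1"

definition malthusian_exponent :: "nat \<Rightarrow> (nat \<Rightarrow> real) \<Rightarrow> real \<Rightarrow> real \<Rightarrow> real \<Rightarrow> real \<Rightarrow> bool" where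
  "malthusian_exponent n \<sigma>2 \<gamma> \<zeta> \<Delta> \<Xi> \<longleftrightarrow>
     \<Xi> > 0 \<and> malthusian_eq n \<sigma>2 \<gamma> \<zeta> \<Delta> \<Xi> \<and>
     (\<forall>x>0. malthusian_eq n \<sigma>2 \<gamma> \<zeta> \<Delta> x \<longrightarrow> x = \<Xi>)"

end

theory Submission
  imports Defs
begin

text \<open>Let \<open>m\<^sub>1, m\<^sub>2\<close> be the roots of \<open>x\<^sup>2 - \<Omega> x + \<Delta>\<close>, ordered so that
  \<open>|m\<^sub>2| \<le> |m\<^sub>1|\<close>; then \<open>\<lambda>\<^sub>2 = m\<^sub>1\<^sup>2\<close>, \<open>\<lambda>\<^sub>3 = m\<^sub>2\<^sup>2\<close>, and the \<open>j\<close>-th summand of \<open>H\<^sub>2(t)\<close>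
  is \<open>\<sigma>\<^sup>4 U\<^sub>t\<^sub>+\<^sub>1\<^sup>2\<close>, where \<open>U\<close> is the Lucas sequence \<open>U\<^sub>k = (m\<^sub>1\<^sup>k - m\<^sub>2\<^sup>k) / (m\<^sub>1 - m\<^sub>2)\<close>
  (also in the double-root case).  Since \<open>m\<^sub>1\<^sup>k = U\<^sub>k\<^sub>+\<^sub>1 - m\<^sub>2 U\<^sub>k\<close>, the sequence \<open>U\<^sub>k\<^sup>2\<close> cannot
  decay faster than \<open>|\<lambda>\<^sub>2|\<^sup>k\<close>, so \<open>x\<^sup>t H\<^sub>2(t)\<close> does not tend to 0 once \<open>x |\<lambda>\<^sub>2| \<ge> 1\<close>;
  convergence of the Malthusian series then forces \<open>\<Xi> |\<lambda>\<^sub>2| < 1\<close>.  The degenerate case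
  \<open>\<lambda>\<^sub>2 = 0\<close> for all \<open>\<sigma>\<^sub>j > 0\<close> is excluded by uniqueness of \<open>\<Xi>\<close>: there \<open>H\<^sub>2(t) = 0\<close>
  for \<open>t \<ge> 1\<close>, so every \<open>x\<close> solves the Malthusian equation or none does.\<close>

fun lucas_U :: "'a::comm_ring_1 \<Rightarrow> 'a \<Rightarrow> nat \<Rightarrow> 'a" where
  "lucas_U P Q 0 = 0"
| "lucas_U P Q (Suc 0) = 1"
| "lucas_U P Q (Suc (Suc n)) = P * lucas_U P Q (Suc n) - Q * lucas_U P Q n"

lemma lucas_U_shift: "lucas_U (a + b) (a * b) (Suc n) - b * lucas_U (a + b) (a * b) n = a ^ n"
proof (induction n)
  case (Suc n)
  have "lucas_U (a + b) (a * b) (Suc (Suc n)) - b * lucas_U (a + b) (a * b) (Suc n)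
      = a * (lucas_U (a + b) (a * b) (Suc n) - b * lucas_U (a + b) (a * b) n)"
    by (simp add: algebra_simps)
  with Suc.IH show ?case by simp
qed simp

lemma lucas_U_binet: "(a - b) * lucas_U (a + b) (a * b) n = a ^ n - b ^ n"
proof -
  let ?U = "lucas_U (a + b) (a * b)"
  have "?U (Suc n) - a * ?U n = b ^ n"
    using lucas_U_shift[of b a n] by (simp only: add.commute mult.commute)
  moreover have "(a - b) * ?U n = (?U (Suc n) - b * ?U n) - (?U (Suc n) - a * ?U n)"
    by (simp add: algebra_simps)
  ultimately show ?thesis
    by (simp only: lucas_U_shift)
qed

lemma lucas_U_square:
  "(a - b)\<^sup>2 * (lucas_U (a + b) (a * b) n)\<^sup>2 = (a\<^sup>2) ^ n + (b\<^sup>2) ^ n - 2 * (a * b) ^ n"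
proof -
  have "(a - b)\<^sup>2 * (lucas_U (a + b) (a * b) n)\<^sup>2 = (a ^ n - b ^ n)\<^sup>2"
    by (simp only: lucas_U_binet flip: power_mult_distrib)
  then show ?thesis
    by (simp add: power2_diff power2_eq_square power_mult_distrib algebra_simps)
qed

lemma lucas_U_double_root: "lucas_U (2 * a) (a ^ 2) (Suc n) = of_nat (Suc n) * a ^ n"
proof (induction n)
  case (Suc n)
  define V where "V = lucas_U (2 * a) (a ^ 2)"
  have "V = lucas_U (a + a) (a * a)"
    by (simp only: V_def mult_2 power2_eq_square)
  then have "V (Suc (Suc n)) - a * V (Suc n) = a ^ Suc n"
    by (simp only: lucas_U_shift)
  moreover have "V (Suc n) = of_nat (Suc n) * a ^ n"
    using Suc.IH by (simp only: V_def)
  ultimately have "V (Suc (Suc n)) = of_nat (Suc (Suc n)) * a ^ Suc n"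
    by (simp add: algebra_simps)
  then show ?case by (simp only: V_def)
qed simp

lemma of_real_lucas_U:
  "of_real (lucas_U P Q n) = (lucas_U (of_real P) (of_real Q) n :: 'a::{real_algebra_1,comm_ring_1})"
  by (induction P Q n rule: lucas_U.induct) simp_all

lemma csqrt_of_real_mult_square:
  "csqrt (of_real (w\<^sup>2 * z)) = of_real \<bar>w\<bar> * csqrt (of_real z)"
  unfolding csqrt_of_real'[of "w\<^sup>2 * z"] csqrt_of_real'[of z]
  by (cases "w = 0") (simp_all add: abs_mult real_sqrt_mult zero_le_mult_iff)

lemma cmod_add_ge_cmod_diff:
  assumes "0 \<le> w * Re y"
  shows "cmod (of_real w - y) \<le> cmod (of_real w + y)"
proof (rule power2_le_imp_le)
  show "(cmod (of_real w - y))\<^sup>2 \<le> (cmod (of_real w + y))\<^sup>2"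
    using assms unfolding cmod_power2 by (simp add: power2_eq_square algebra_simps)
qed simp

lemma quadratic_roots_csqrt:
  fixes w D :: real
  obtains m1 m2 :: complex
  where "m1 + m2 = of_real w" "m1 * m2 = of_real D" "cmod m2 \<le> cmod m1"
    and "m1\<^sup>2 = (of_real (- 2 * D + w\<^sup>2) + csqrt (of_real (w\<^sup>2 * (w\<^sup>2 - 4 * D)))) / 2"
    and "m2\<^sup>2 = (of_real (- 2 * D + w\<^sup>2) - csqrt (of_real (w\<^sup>2 * (w\<^sup>2 - 4 * D)))) / 2"
proof
  \<comment> \<open>The sign \<open>e\<close> makes \<open>w c\<close> the principal square root and \<open>w Re c \<ge> 0\<close>.\<close>
  define e :: real where "e = (if w \<ge> 0 then 1 else -1)"
  define c where "c = of_real e * csqrt (of_real (w\<^sup>2 - 4 * D))"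
  have c2: "c\<^sup>2 = of_real (w\<^sup>2 - 4 * D)"
    by (simp add: c_def e_def power_mult_distrib)
  have wc: "of_real w * c = csqrt (of_real (w\<^sup>2 * (w\<^sup>2 - 4 * D)))"
    unfolding csqrt_of_real_mult_square c_def e_def by (cases "w \<ge> 0") simp_all
  show "(of_real w + c) / 2 + (of_real w - c) / 2 = of_real w" by (simp add: field_simps)
  show "(of_real w + c) / 2 * ((of_real w - c) / 2) = of_real D"
    using c2 by (simp add: field_simps power2_eq_square)
  show "((of_real w + c) / 2)\<^sup>2 = (of_real (- 2 * D + w\<^sup>2) + csqrt (of_real (w\<^sup>2 * (w\<^sup>2 - 4 * D)))) / 2"
    unfolding wc[symmetric] power_divide power2_sum c2 by (simp add: field_simps)
  show "((of_real w - c) / 2)\<^sup>2 = (of_real (- 2 * D + w\<^sup>2) - csqrt (of_real (w\<^sup>2 * (w\<^sup>2 - 4 * D)))) / 2"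
    unfolding wc[symmetric] power_divide power2_diff c2 by (simp add: field_simps)
  have "0 \<le> w * Re c"
    using Re_csqrt[of "of_real (w\<^sup>2 - 4 * D)"]
    by (cases "w \<ge> 0") (simp_all add: c_def e_def mult_nonpos_nonneg del: csqrt.sel)
  then show "cmod ((of_real w - c) / 2) \<le> cmod ((of_real w + c) / 2)"
    by (simp add: norm_divide cmod_add_ge_cmod_diff)
qed

lemma lam2_lam3_char_roots:
  obtains m1 m2 :: complex
  where "m1 + m2 = of_real (Omega \<gamma> \<zeta> \<Delta> s)" "m1 * m2 = of_real \<Delta>" "cmod m2 \<le> cmod m1"
    and "lam2 \<gamma> \<zeta> \<Delta> s = m1\<^sup>2" "lam3 \<gamma> \<zeta> \<Delta> s = m2\<^sup>2"
proof -
  obtain m1 m2 where m: "m1 + m2 = of_real (Omega \<gamma> \<zeta> \<Delta> s)" "m1 * m2 = of_real \<Delta>"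
      "cmod m2 \<le> cmod m1"
    and "m1\<^sup>2 = (of_real (- 2 * \<Delta> + (Omega \<gamma> \<zeta> \<Delta> s)\<^sup>2)
                  + csqrt (of_real ((Omega \<gamma> \<zeta> \<Delta> s)\<^sup>2 * ((Omega \<gamma> \<zeta> \<Delta> s)\<^sup>2 - 4 * \<Delta>)))) / 2"
    and "m2\<^sup>2 = (of_real (- 2 * \<Delta> + (Omega \<gamma> \<zeta> \<Delta> s)\<^sup>2)
                  - csqrt (of_real ((Omega \<gamma> \<zeta> \<Delta> s)\<^sup>2 * ((Omega \<gamma> \<zeta> \<Delta> s)\<^sup>2 - 4 * \<Delta>)))) / 2"
    by (rule quadratic_roots_csqrt)
  then have "lam2 \<gamma> \<zeta> \<Delta> s = m1\<^sup>2" "lam3 \<gamma> \<zeta> \<Delta> s = m2\<^sup>2"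
    by (simp_all only: lam2_def lam3_def Let_def)
  with m show thesis by (rule that)
qed

lemma H2_term_eq_lucas_U:
  "H2_term \<gamma> \<zeta> \<Delta> s t = s\<^sup>2 * (lucas_U (Omega \<gamma> \<zeta> \<Delta> s) \<Delta> (Suc t))\<^sup>2"
proof (cases "(Omega \<gamma> \<zeta> \<Delta> s)\<^sup>2 = 4 * \<Delta>")
  case True
  define m where "m = Omega \<gamma> \<zeta> \<Delta> s / 2"
  have "Omega \<gamma> \<zeta> \<Delta> s = 2 * m" and \<Delta>: "\<Delta> = m\<^sup>2"
    using True by (simp_all add: m_def power_divide)
  then have "lucas_U (Omega \<gamma> \<zeta> \<Delta> s) \<Delta> (Suc t) = real (Suc t) * m ^ t"
    by (simp only: lucas_U_double_root)
  with True show ?thesis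
    by (simp add: H2_term_def \<Delta> power_mult_distrib flip: power_mult)
      (simp add: mult.commute)
next
  case False
  define \<Omega> where "\<Omega> = Omega \<gamma> \<zeta> \<Delta> s"
  define U where "U = lucas_U \<Omega> \<Delta> (Suc t)"
  define d where "d = \<Omega>\<^sup>2 - 4 * \<Delta>"
  have "d \<noteq> 0"
    using False by (simp add: d_def \<Omega>_def)
  obtain m1 m2 where m: "m1 + m2 = of_real \<Omega>" "m1 * m2 = of_real \<Delta>"
    and lam: "lam2 \<gamma> \<zeta> \<Delta> s = m1\<^sup>2" "lam3 \<gamma> \<zeta> \<Delta> s = m2\<^sup>2"
    unfolding \<Omega>_def by (rule lam2_lam3_char_roots)
  have U: "of_real U = lucas_U (m1 + m2) (m1 * m2) (t + 1)"
    by (simp add: U_def of_real_lucas_U m)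
  have disc: "(m1 - m2)\<^sup>2 = of_real d"
    by (simp flip: m add: d_def power2_eq_square algebra_simps)
  have "of_real (d * U\<^sup>2) = (m1 - m2)\<^sup>2 * (of_real U)\<^sup>2"
    by (simp only: disc of_real_mult of_real_power)
  also have "\<dots> = (m1\<^sup>2) ^ (t + 1) + (m2\<^sup>2) ^ (t + 1) - 2 * (m1 * m2) ^ (t + 1)"
    by (simp only: U lucas_U_square)
  finally have disc_U: "of_real (d * U\<^sup>2)
      = (m1\<^sup>2) ^ (t + 1) + (m2\<^sup>2) ^ (t + 1) - 2 * (m1 * m2) ^ (t + 1)" .
  have "- of_real (\<Delta> ^ (t + 1))
        + lam2 \<gamma> \<zeta> \<Delta> s ^ (t + 1) / 2 + lam3 \<gamma> \<zeta> \<Delta> s ^ (t + 1) / 2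
      = ((m1\<^sup>2) ^ (t + 1) + (m2\<^sup>2) ^ (t + 1) - 2 * (m1 * m2) ^ (t + 1)) / 2"
    by (simp only: lam of_real_power m(2)) (simp add: field_simps)
  also have "\<dots> = of_real (d * U\<^sup>2) / 2"
    by (simp only: disc_U)
  finally have bracket: "- of_real (\<Delta> ^ (t + 1))
        + lam2 \<gamma> \<zeta> \<Delta> s ^ (t + 1) / 2 + lam3 \<gamma> \<zeta> \<Delta> s ^ (t + 1) / 2
      = of_real (d * U\<^sup>2) / 2" .
  have "H2_term \<gamma> \<zeta> \<Delta> s t = Re (of_real (2 * s\<^sup>2 / d) * (of_real (d * U\<^sup>2) / 2))"
    using False
    by (simp only: H2_term_def Let_def \<Omega>_def [symmetric] d_def [symmetric] if_False bracket)
  also have "\<dots> = s\<^sup>2 * U\<^sup>2"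
    using \<open>d \<noteq> 0\<close> by (simp flip: of_real_mult)
  finally show ?thesis
    by (simp only: U_def \<Omega>_def)
qed

lemma lucas_U_not_decaying:
  fixes a b :: complex and x :: real
  assumes "cmod b \<le> cmod a" and "1 \<le> x * (cmod a)\<^sup>2"
  shows "\<not> (\<lambda>n. x ^ n * (cmod (lucas_U (a + b) (a * b) (Suc n)))\<^sup>2) \<longlonglongrightarrow> 0"
proof
  define U where "U = lucas_U (a + b) (a * b)"
  define f where "f = (\<lambda>n. x ^ n * (cmod (U (Suc n)))\<^sup>2)"
  define r where "r = cmod a"
  have "0 < x"
    using assms(2) by (smt (verit) mult_nonpos_nonneg zero_le_power2)
  have bound: "1 \<le> 2 * f (Suc n) + 2 * (x * r\<^sup>2) * f n" for n
  proof -
    have "r ^ Suc n = cmod (U (Suc (Suc n)) - b * U (Suc n))"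
      by (simp only: U_def r_def lucas_U_shift norm_power)
    also have "\<dots> \<le> cmod (U (Suc (Suc n))) + r * cmod (U (Suc n))"
      using norm_triangle_ineq4[of "U (Suc (Suc n))" "b * U (Suc n)"]
        mult_right_mono[OF assms(1) norm_ge_zero[of "U (Suc n)"]]
      by (simp add: r_def norm_mult)
    finally have "(r ^ Suc n)\<^sup>2 \<le> (cmod (U (Suc (Suc n))) + r * cmod (U (Suc n)))\<^sup>2"
      by (simp add: r_def power_mono)
    also have "\<dots> \<le> 2 * (cmod (U (Suc (Suc n))))\<^sup>2 + 2 * r\<^sup>2 * (cmod (U (Suc n)))\<^sup>2"
      using zero_le_power2[of "cmod (U (Suc (Suc n))) - r * cmod (U (Suc n))"]
      by (simp add: power2_eq_square algebra_simps)
    finally have "x ^ Suc n * (r ^ Suc n)\<^sup>2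
        \<le> x ^ Suc n * (2 * (cmod (U (Suc (Suc n))))\<^sup>2 + 2 * r\<^sup>2 * (cmod (U (Suc n)))\<^sup>2)"
      using \<open>0 < x\<close> by (intro mult_left_mono) simp_all
    moreover have "x ^ Suc n * (r ^ Suc n)\<^sup>2 = (x * r\<^sup>2) ^ Suc n"
      by (simp only: power_mult_distrib power2_eq_square)
    moreover have "x ^ Suc n * (2 * (cmod (U (Suc (Suc n))))\<^sup>2 + 2 * r\<^sup>2 * (cmod (U (Suc n)))\<^sup>2)
        = 2 * f (Suc n) + 2 * (x * r\<^sup>2) * f n"
      by (simp add: f_def algebra_simps)
    moreover have "1 \<le> (x * r\<^sup>2) ^ Suc n"
      using assms(2) unfolding r_def by (rule one_le_power)
    ultimately show ?thesis by linarith
  qed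
  assume "(\<lambda>n. x ^ n * (cmod (lucas_U (a + b) (a * b) (Suc n)))\<^sup>2) \<longlonglongrightarrow> 0"
  then have "f \<longlonglongrightarrow> 0" by (simp add: f_def U_def)
  then have "(\<lambda>n. 2 * f (Suc n) + 2 * (x * r\<^sup>2) * f n) \<longlonglongrightarrow> 2 * 0 + 2 * (x * r\<^sup>2) * 0"
    by (intro tendsto_intros LIMSEQ_Suc)
  then have "1 \<le> (0::real)"
    using bound by (intro LIMSEQ_le_const) auto
  then show False by simp
qed

lemma H2_term_not_decaying:
  assumes "s \<noteq> 0" and "1 \<le> x * cmod (lam2 \<gamma> \<zeta> \<Delta> s)"
  shows "\<not> (\<lambda>t. x ^ t * H2_term \<gamma> \<zeta> \<Delta> s t) \<longlonglongrightarrow> 0"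
proof
  obtain m1 m2 where m: "m1 + m2 = of_real (Omega \<gamma> \<zeta> \<Delta> s)" "m1 * m2 = of_real \<Delta>"
    and "cmod m2 \<le> cmod m1" and "lam2 \<gamma> \<zeta> \<Delta> s = m1\<^sup>2"
    by (rule lam2_lam3_char_roots)
  with assms(2) have "\<not> (\<lambda>t. x ^ t * (cmod (lucas_U (m1 + m2) (m1 * m2) (Suc t)))\<^sup>2) \<longlonglongrightarrow> 0"
    by (intro lucas_U_not_decaying) (simp_all add: norm_power)
  moreover have "x ^ t * (cmod (lucas_U (m1 + m2) (m1 * m2) (Suc t)))\<^sup>2
      = 1 / s\<^sup>2 * (x ^ t * H2_term \<gamma> \<zeta> \<Delta> s t)" for t
    using assms(1) by (simp add: m H2_term_eq_lucas_U flip: of_real_lucas_U)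
  moreover assume "(\<lambda>t. x ^ t * H2_term \<gamma> \<zeta> \<Delta> s t) \<longlonglongrightarrow> 0"
  then have "(\<lambda>t. 1 / s\<^sup>2 * (x ^ t * H2_term \<gamma> \<zeta> \<Delta> s t)) \<longlonglongrightarrow> 0"
    by (rule tendsto_mult_right_zero)
  ultimately show False by simp
qed

lemma H2_term_Suc_eq_0:
  assumes "lam2 \<gamma> \<zeta> \<Delta> s = 0"
  shows "H2_term \<gamma> \<zeta> \<Delta> s (Suc t) = 0"
proof -
  obtain m1 m2 where m: "m1 + m2 = of_real (Omega \<gamma> \<zeta> \<Delta> s)" "m1 * m2 = of_real \<Delta>"
    and "cmod m2 \<le> cmod m1" and "lam2 \<gamma> \<zeta> \<Delta> s = m1\<^sup>2"
    by (rule lam2_lam3_char_roots)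
  with assms have "m1 = 0" "m2 = 0" by simp_all
  with m have "Omega \<gamma> \<zeta> \<Delta> s = 0" "\<Delta> = 0" by simp_all
  then show ?thesis by (simp add: H2_term_eq_lucas_U)
qed

lemma malthusian_eq_iff_H2_0:
  assumes "\<And>t. H2 n \<sigma>2 \<gamma> \<zeta> \<Delta> (Suc t) = 0"
  shows "malthusian_eq n \<sigma>2 \<gamma> \<zeta> \<Delta> x \<longleftrightarrow> \<gamma>\<^sup>2 * \<zeta> * (1 - \<zeta>) * H2 n \<sigma>2 \<gamma> \<zeta> \<Delta> 0 = 1"
proof -
  have "(\<lambda>t. x ^ t * H2 n \<sigma>2 \<gamma> \<zeta> \<Delta> t) = (\<lambda>t. if t = 0 then H2 n \<sigma>2 \<gamma> \<zeta> \<Delta> 0 else 0)"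
    by (rule ext) (metis assms mult_zero_right not0_implies_Suc power_0 mult_1)
  then have "(\<lambda>t. x ^ t * H2 n \<sigma>2 \<gamma> \<zeta> \<Delta> t) sums H2 n \<sigma>2 \<gamma> \<zeta> \<Delta> 0"
    using sums_single[of 0 "\<lambda>_. H2 n \<sigma>2 \<gamma> \<zeta> \<Delta> 0"] by simp
  then show ?thesis by (simp add: malthusian_eq_def sums_iff)
qed

lemma malthusian_exponent_obtains_lam2_nonzero:
  assumes "malthusian_exponent n \<sigma>2 \<gamma> \<zeta> \<Delta> \<Xi>"
  obtains j where "j < n" "\<sigma>2 j \<noteq> 0" "lam2 \<gamma> \<zeta> \<Delta> (\<sigma>2 j) \<noteq> 0"
proof (rule ccontr)
  assume "\<not> thesis"
  with that have degenerate: "\<sigma>2 j = 0 \<or> lam2 \<gamma> \<zeta> \<Delta> (\<sigma>2 j) = 0" if "j < n" for j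
    using \<open>j < n\<close> by blast
  have "H2_term \<gamma> \<zeta> \<Delta> (\<sigma>2 j) (Suc t) = 0" if "j < n" for j t
  proof (cases "\<sigma>2 j = 0")
    case True
    then show ?thesis by (simp add: H2_term_eq_lucas_U)
  next
    case False
    with degenerate[OF \<open>j < n\<close>] show ?thesis by (simp add: H2_term_Suc_eq_0)
  qed
  then have "H2 n \<sigma>2 \<gamma> \<zeta> \<Delta> (Suc t) = 0" for t
    by (simp add: H2_def)
  then have "malthusian_eq n \<sigma>2 \<gamma> \<zeta> \<Delta> (\<Xi> + 1) = malthusian_eq n \<sigma>2 \<gamma> \<zeta> \<Delta> \<Xi>"
    by (simp add: malthusian_eq_iff_H2_0)
  with assms have "\<Xi> + 1 > 0" "malthusian_eq n \<sigma>2 \<gamma> \<zeta> \<Delta> (\<Xi> + 1)"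
    unfolding malthusian_exponent_def by simp_all
  with assms have "\<Xi> + 1 = \<Xi>"
    unfolding malthusian_exponent_def by blast
  then show False by simp
qed

lemma H2_term_tendsto_0_of_summable:
  assumes "summable (\<lambda>t. x ^ t * H2 n \<sigma>2 \<gamma> \<zeta> \<Delta> t)" and "0 \<le> x" and "j < n"
  shows "(\<lambda>t. x ^ t * H2_term \<gamma> \<zeta> \<Delta> (\<sigma>2 j) t) \<longlonglongrightarrow> 0"
proof (rule tendsto_sandwich[OF _ _ tendsto_const])
  show "\<forall>\<^sub>F t in sequentially. 0 \<le> x ^ t * H2_term \<gamma> \<zeta> \<Delta> (\<sigma>2 j) t"
    using assms(2) by (simp add: H2_term_eq_lucas_U)
  have "H2_term \<gamma> \<zeta> \<Delta> (\<sigma>2 j) t \<le> (\<Sum>k<n. H2_term \<gamma> \<zeta> \<Delta> (\<sigma>2 k) t)" for t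
    using assms(3) by (intro member_le_sum) (simp_all add: H2_term_eq_lucas_U)
  then have "H2_term \<gamma> \<zeta> \<Delta> (\<sigma>2 j) t \<le> real n * H2 n \<sigma>2 \<gamma> \<zeta> \<Delta> t" for t
    using assms(3) by (simp add: H2_def)
  then have "x ^ t * H2_term \<gamma> \<zeta> \<Delta> (\<sigma>2 j) t \<le> real n * (x ^ t * H2 n \<sigma>2 \<gamma> \<zeta> \<Delta> t)" for t
    using assms(2) by (metis mult.left_commute mult_left_mono zero_le_power)
  then show "\<forall>\<^sub>F t in sequentially. x ^ t * H2_term \<gamma> \<zeta> \<Delta> (\<sigma>2 j) t
      \<le> real n * (x ^ t * H2 n \<sigma>2 \<gamma> \<zeta> \<Delta> t)"
    by (simp add: always_eventually)
  show "(\<lambda>t. real n * (x ^ t * H2 n \<sigma>2 \<gamma> \<zeta> \<Delta> t)) \<longlonglongrightarrow> 0"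
    using summable_LIMSEQ_zero[OF assms(1)] by (rule tendsto_mult_right_zero)
qed

lemma lam2_max_attained:
  assumes "j < n" "\<sigma>2 j > 0" "lam2 \<gamma> \<zeta> \<Delta> (\<sigma>2 j) \<noteq> 0"
  obtains j0 where "j0 < n" "\<sigma>2 j0 > 0"
    and "lam2_max n \<sigma>2 \<gamma> \<zeta> \<Delta> = cmod (lam2 \<gamma> \<zeta> \<Delta> (\<sigma>2 j0))" "0 < lam2_max n \<sigma>2 \<gamma> \<zeta> \<Delta>"
proof -
  define S where "S = {cmod (lam2 \<gamma> \<zeta> \<Delta> (\<sigma>2 j)) | j. j < n \<and> \<sigma>2 j > 0}"
  have max: "lam2_max n \<sigma>2 \<gamma> \<zeta> \<Delta> = Max S"
    by (simp add: lam2_max_def S_def)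
  have "finite S" by (simp add: S_def)
  have "cmod (lam2 \<gamma> \<zeta> \<Delta> (\<sigma>2 j)) \<in> S"
    using assms by (auto simp: S_def)
  have "0 < cmod (lam2 \<gamma> \<zeta> \<Delta> (\<sigma>2 j))"
    using assms(3) by simp
  also have "\<dots> \<le> Max S"
    using \<open>finite S\<close> \<open>cmod (lam2 \<gamma> \<zeta> \<Delta> (\<sigma>2 j)) \<in> S\<close> by (rule Max_ge)
  finally have "0 < Max S" .
  moreover obtain j0 where "j0 < n" "\<sigma>2 j0 > 0" "Max S = cmod (lam2 \<gamma> \<zeta> \<Delta> (\<sigma>2 j0))"
    using Max_in[OF \<open>finite S\<close>] \<open>cmod (lam2 \<gamma> \<zeta> \<Delta> (\<sigma>2 j)) \<in> S\<close> by (force simp: S_def)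
  ultimately show thesis
    using that by (simp add: max)
qed

theorem proposition14:
  fixes n :: nat and \<sigma>2 :: "nat \<Rightarrow> real" and \<gamma> \<zeta> \<Delta> \<Xi> :: real
  assumes "n \<ge> 1"
    and "\<And>j. j < n \<Longrightarrow> \<sigma>2 j \<ge> 0"
    and "\<And>i j. i \<le> j \<Longrightarrow> j < n \<Longrightarrow> \<sigma>2 j \<le> \<sigma>2 i"
    and "\<gamma> > 0" and "0 < \<zeta>" and "\<zeta> < 1" and "0 \<le> \<Delta>" and "\<Delta> < 1"
    and "malthusian_exponent n \<sigma>2 \<gamma> \<zeta> \<Delta> \<Xi>"
  shows "\<Xi> < 1 / lam2_max n \<sigma>2 \<gamma> \<zeta> \<Delta>"
proof -
  from assms(9) have "\<Xi> > 0" and summable: "summable (\<lambda>t. \<Xi> ^ t * H2 n \<sigma>2 \<gamma> \<zeta> \<Delta> t)"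
    unfolding malthusian_exponent_def malthusian_eq_def by blast+
  obtain j1 where j1: "j1 < n" "\<sigma>2 j1 \<noteq> 0" "lam2 \<gamma> \<zeta> \<Delta> (\<sigma>2 j1) \<noteq> 0"
    using assms(9) by (rule malthusian_exponent_obtains_lam2_nonzero)
  have "\<sigma>2 j1 > 0"
    using assms(2)[OF j1(1)] j1(2) by linarith
  obtain j0 where j0: "j0 < n" "\<sigma>2 j0 > 0"
    and max: "lam2_max n \<sigma>2 \<gamma> \<zeta> \<Delta> = cmod (lam2 \<gamma> \<zeta> \<Delta> (\<sigma>2 j0))" "0 < lam2_max n \<sigma>2 \<gamma> \<zeta> \<Delta>"
    by (rule lam2_max_attained[of j1 n \<sigma>2 \<gamma> \<zeta> \<Delta>, OF j1(1) \<open>\<sigma>2 j1 > 0\<close> j1(3)])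
  have "(\<lambda>t. \<Xi> ^ t * H2_term \<gamma> \<zeta> \<Delta> (\<sigma>2 j0) t) \<longlonglongrightarrow> 0"
    using summable less_imp_le[OF \<open>\<Xi> > 0\<close>] j0(1) by (rule H2_term_tendsto_0_of_summable)
  then have "\<not> 1 \<le> \<Xi> * cmod (lam2 \<gamma> \<zeta> \<Delta> (\<sigma>2 j0))"
    using H2_term_not_decaying[of "\<sigma>2 j0" \<Xi>] j0(2) by auto
  with max show ?thesis
    by (simp add: field_simps)
qed

end
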